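(* Let $X=[1,+\infty)$ with the metric $d(x,y)=|x-y|$, and define $S:X\to X$ by $Sx=4\sqrt{x}$ and $T:X\to X$ by $Tx=\ln(e\cdot x)$. Then: (i) there is no $k\in[0,1)$ and no nonnegative Lebesgue-integrable $\phi:[0,+\infty)\to[0,+\infty)$, summable on compact subsets and with $\int_0^\epsilon\phi(t)\,dt>0$ for all $\epsilon>0$, such that for all $x,y\in X$ \[\int_0^{d(Sx,Sy)}\phi(t)\,dt\le k\int_0^{m(x,y)}\phi(t)\,dt,\quad m(x,y)=\max\Big\{d(x,y),d(x,Sx),d(y,Sy),\tfrac{d(x,Sy)+d(y,Sx)}{2}\Big\};\] (ii) $T$ is one-to-one, continuous and sequentially convergent, and for all $x,y\in X$, $|TSx-TSy|=\tfrac12|Tx-Ty|$; in particular, with $\phi\equiv 1$ and $k=\tfrac12$, for all $x,y\in X$, \[\int_0^{d(TSx,TSy)}\phi(t)\,dt\le k\int_0^{m'(Tx,Ty)}\phi(t)\,dt,\quad m'(Tx,Ty)=\max\Big\{d(Tx,Ty),d(Tx,TSx),d(Ty,TSy),\tfrac{d(Tx,TSy)+d(Ty,TSx)}{2}\Big\}.\]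
   Context: A mapping $T:X\to X$ on a metric space $(X,d)$ is called sequentially convergent if for every sequence $\{y_n\}$ in $X$, convergence of $\{Ty_n\}$ implies convergence of $\{y_n\}$. *)

theory Defs
  imports "HOL-Analysis.Analysis"
begin

definition X :: "real set" where "X = {1..}"

definition S :: "real \<Rightarrow> real" where "S x = 4 * sqrt x"

definition T :: "real \<Rightarrow> real" where "T x = ln (exp 1 * x)"

definition mfun :: "(real \<Rightarrow> real) \<Rightarrow> real \<Rightarrow> real \<Rightarrow> real" where
  "mfun F x y = Max {dist x y, dist x (F x), dist y (F y), (dist x (F y) + dist y (F x)) / 2}"

definition seq_convergent_on :: "'a::metric_space set \<Rightarrow> ('a \<Rightarrow> 'a) \<Rightarrow> bool" where
  "seq_convergent_on A F \<longleftrightarrow>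
     (\<forall>y. (\<forall>n. y n \<in> A) \<longrightarrow> (\<exists>L\<in>A. (\<lambda>n. F (y n)) \<longlonglongrightarrow> L) \<longrightarrow> (\<exists>L\<in>A. y \<longlonglongrightarrow> L))"

definition Int0 :: "(real \<Rightarrow> real) \<Rightarrow> real \<Rightarrow> real" where
  "Int0 \<phi> a = (\<integral>t\<in>{0..a}. \<phi> t \<partial>lborel)"

end

theory Submission
  imports Defs
begin

(* Proof idea.
   (i) S admits no Branciari-type contraction: for x = 1, y = 4 we have S 1 = 4, S 4 = 8,
       so d(S 1, S 4) = 4 = m(1, 4).  An inequality I(a) <= k I(a) with I(a) > 0 forces
       k >= 1.  This is isolated as a general lemma about any self-map attaining
       d(F x, F y) = m(x, y) > 0.
   (ii) T x = 1 + ln x on X has the continuous left inverse z |-> exp (z - 1), which maps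
       X into X; a general lemma turns such a left inverse into injectivity and sequential
       convergence.  Moreover T (S x) = 1 + ln 4 + (ln x)/2, so T o S halves T-distances;
       with phi = 1 the integral Int0 phi a is just a, and the contractive inequality
       follows because d(Tx, Ty) is one of the four terms of the maximum. *)

lemma Int0_const_one:
  assumes "a \<ge> 0"
  shows "Int0 (\<lambda>t. 1) a = a"
  using assms by (simp add: Int0_def set_lebesgue_integral_def)

lemma no_branciari_contraction_if_extremal_pair:
  assumes "x \<in> A" "y \<in> A"
    and extremal: "dist (F x) (F y) = mfun F x y" and pos: "mfun F x y > 0"
  shows "\<not> (\<exists>k \<phi>. 0 \<le> k \<and> k < 1
          \<and> (\<forall>t\<ge>0. \<phi> t \<ge> 0)
          \<and> (\<forall>a\<ge>0. set_integrable lborel {0..a} \<phi>)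
          \<and> (\<forall>\<epsilon>>0. Int0 \<phi> \<epsilon> > 0)
          \<and> (\<forall>x\<in>A. \<forall>y\<in>A. Int0 \<phi> (dist (F x) (F y)) \<le> k * Int0 \<phi> (mfun F x y)))"
proof
  assume "\<exists>k \<phi>. 0 \<le> k \<and> k < 1
          \<and> (\<forall>t\<ge>0. \<phi> t \<ge> 0)
          \<and> (\<forall>a\<ge>0. set_integrable lborel {0..a} \<phi>)
          \<and> (\<forall>\<epsilon>>0. Int0 \<phi> \<epsilon> > 0)
          \<and> (\<forall>x\<in>A. \<forall>y\<in>A. Int0 \<phi> (dist (F x) (F y)) \<le> k * Int0 \<phi> (mfun F x y))"
  then obtain k \<phi> where k: "k < 1" and int_pos: "\<forall>\<epsilon>>0. Int0 \<phi> \<epsilon> > 0"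
    and contr: "\<forall>x\<in>A. \<forall>y\<in>A. Int0 \<phi> (dist (F x) (F y)) \<le> k * Int0 \<phi> (mfun F x y)"
    by blast
  define I where "I = Int0 \<phi> (mfun F x y)"
  have "Int0 \<phi> (dist (F x) (F y)) \<le> k * I"
    using contr assms(1,2) unfolding I_def by blast
  hence "I \<le> k * I" using extremal by (simp add: I_def)
  moreover have "I > 0" using int_pos pos by (simp add: I_def)
  ultimately show False using k by (simp add: mult_le_cancel_right2)
qed

lemma left_inverse_imp_inj_seq_convergent:
  fixes F G :: "'a::metric_space \<Rightarrow> 'a"
  assumes inv: "\<forall>x\<in>A. G (F x) = x" and cont: "continuous_on UNIV G" and G_into: "G ` A \<subseteq> A"
  shows "inj_on F A" "seq_convergent_on A F"
proof -
  show "inj_on F A" using inv by (metis inj_on_inverseI)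
  show "seq_convergent_on A F"
    unfolding seq_convergent_on_def
  proof (intro allI impI)
    fix y :: "nat \<Rightarrow> 'a" assume y: "\<forall>n. y n \<in> A" and "\<exists>L\<in>A. (\<lambda>n. F (y n)) \<longlonglongrightarrow> L"
    then obtain L where L: "L \<in> A" "(\<lambda>n. F (y n)) \<longlonglongrightarrow> L" by blast
    have "isCont G L" using cont by (simp add: continuous_on_eq_continuous_at)
    hence "(\<lambda>n. G (F (y n))) \<longlonglongrightarrow> G L" using L(2) by (rule isCont_tendsto_compose)
    hence "y \<longlonglongrightarrow> G L" using inv y by simp
    moreover have "G L \<in> A" using G_into L(1) by blast
    ultimately show "\<exists>L\<in>A. y \<longlonglongrightarrow> L" by blast
  qed
qed

lemma S_maps_X: "S ` X \<subseteq> X"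
proof
  fix z assume "z \<in> S ` X"
  then obtain x where "x \<ge> 1" "z = 4 * sqrt x" by (auto simp: X_def S_def)
  moreover have "sqrt x \<ge> 1" using \<open>x \<ge> 1\<close> by simp
  ultimately have "z \<ge> 1" by linarith
  thus "z \<in> X" by (simp add: X_def)
qed

lemma T_eq: "x > 0 \<Longrightarrow> T x = 1 + ln x"
  by (simp add: T_def ln_mult)

lemma T_S_eq: "x > 0 \<Longrightarrow> T (S x) = 1 + ln 4 + ln x / 2"
  by (simp add: T_eq S_def ln_mult ln_sqrt)

lemma T_maps_X: "T ` X \<subseteq> X"
  by (auto simp: X_def T_eq)

lemma T_left_inverse: "x > 0 \<Longrightarrow> exp (T x - 1) = x"
  by (simp add: T_eq)

text \<open>The inverse exp (z - 1) is continuous and maps X into X, so T is injective and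
  sequentially convergent on X.\<close>
lemma T_inj_seq_convergent: "inj_on T X" "seq_convergent_on X T"
proof -
  have inv: "\<forall>x\<in>X. exp (T x - 1) = x" by (simp add: X_def T_left_inverse)
  have cont: "continuous_on UNIV (\<lambda>z::real. exp (z - 1))" by (intro continuous_intros)
  have into: "(\<lambda>z. exp (z - 1)) ` X \<subseteq> X" by (auto simp: X_def)
  show "inj_on T X" "seq_convergent_on X T"
    using left_inverse_imp_inj_seq_convergent[OF inv cont into] by blast+
qed

lemma T_continuous: "continuous_on X T"
  unfolding T_def X_def by (intro continuous_intros) auto

text \<open>Composing with S halves all T-distances: T (S x) is affine in T x with slope 1/2.\<close>
lemma T_S_halves_distance:
  assumes "x > 0" "y > 0"
  shows "\<bar>T (S x) - T (S y)\<bar> = 1/2 * \<bar>T x - T y\<bar>"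
  using assms by (simp add: T_S_eq T_eq abs_if)

lemma Max_four_ge_first: "(a::real) \<le> Max {a, b, c, d}"
  by simp

lemma T_S_integral_contraction:
  assumes "x \<in> X" "y \<in> X"
  shows "Int0 (\<lambda>t. 1) (dist (T (S x)) (T (S y)))
     \<le> 1/2 * Int0 (\<lambda>t. 1) (Max {dist (T x) (T y), dist (T x) (T (S x)), dist (T y) (T (S y)),
                                  (dist (T x) (T (S y)) + dist (T y) (T (S x))) / 2})"
    (is "_ \<le> _ * Int0 _ ?M")
proof -
  have half: "dist (T (S x)) (T (S y)) = 1/2 * dist (T x) (T y)"
    using assms T_S_halves_distance by (simp add: X_def dist_real_def)
  have le_M: "dist (T x) (T y) \<le> ?M" by (rule Max_four_ge_first)
  hence "Int0 (\<lambda>t. 1) ?M = ?M" using zero_le_dist order_trans Int0_const_one by blast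
  moreover have "Int0 (\<lambda>t. 1) (dist (T (S x)) (T (S y))) = dist (T (S x)) (T (S y))"
    by (rule Int0_const_one) simp
  ultimately show ?thesis using half le_M by linarith
qed

theorem mainTheorem5:
  shows "S ` X \<subseteq> X \<and> T ` X \<subseteq> X
    \<and> \<not> (\<exists>k \<phi>. 0 \<le> k \<and> k < 1
          \<and> (\<forall>t\<ge>0. \<phi> t \<ge> 0)
          \<and> (\<forall>a\<ge>0. set_integrable lborel {0..a} \<phi>)
          \<and> (\<forall>\<epsilon>>0. Int0 \<phi> \<epsilon> > 0)
          \<and> (\<forall>x\<in>X. \<forall>y\<in>X. Int0 \<phi> (dist (S x) (S y)) \<le> k * Int0 \<phi> (mfun S x y)))
    \<and> (inj_on T X \<and> continuous_on X T \<and> seq_convergent_on X T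
       \<and> (\<forall>x\<in>X. \<forall>y\<in>X. \<bar>T (S x) - T (S y)\<bar> = 1/2 * \<bar>T x - T y\<bar>)
       \<and> (let \<phi> = (\<lambda>t::real. 1::real); k = (1/2::real) in
            \<forall>x\<in>X. \<forall>y\<in>X. Int0 \<phi> (dist (T (S x)) (T (S y)))
               \<le> k * Int0 \<phi> (Max {dist (T x) (T y), dist (T x) (T (S x)), dist (T y) (T (S y)),
                                    (dist (T x) (T (S y)) + dist (T y) (T (S x))) / 2})))"
proof -
  have sqrt4: "sqrt 4 = (2::real)" by (simp add: real_sqrt_eq_iff)
  have S_1_4: "dist (S 1) (S 4) = 4" "mfun S 1 4 = 4"
    by (simp_all add: S_def sqrt4 mfun_def dist_real_def)
  have "(1::real) \<in> X" "(4::real) \<in> X" by (simp_all add: X_def)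
  then have no_contraction: "\<not> (\<exists>k \<phi>. 0 \<le> k \<and> k < 1
          \<and> (\<forall>t\<ge>0. \<phi> t \<ge> 0)
          \<and> (\<forall>a\<ge>0. set_integrable lborel {0..a} \<phi>)
          \<and> (\<forall>\<epsilon>>0. Int0 \<phi> \<epsilon> > 0)
          \<and> (\<forall>x\<in>X. \<forall>y\<in>X. Int0 \<phi> (dist (S x) (S y)) \<le> k * Int0 \<phi> (mfun S x y)))"
    by (rule no_branciari_contraction_if_extremal_pair) (simp_all only: S_1_4)
  have halves: "\<forall>x\<in>X. \<forall>y\<in>X. \<bar>T (S x) - T (S y)\<bar> = 1/2 * \<bar>T x - T y\<bar>"
    by (simp add: X_def T_S_halves_distance)
  have integral_contraction: "let \<phi> = (\<lambda>t::real. 1::real); k = (1/2::real) in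
            \<forall>x\<in>X. \<forall>y\<in>X. Int0 \<phi> (dist (T (S x)) (T (S y)))
               \<le> k * Int0 \<phi> (Max {dist (T x) (T y), dist (T x) (T (S x)), dist (T y) (T (S y)),
                                    (dist (T x) (T (S y)) + dist (T y) (T (S x))) / 2})"
    unfolding Let_def by (intro ballI T_S_integral_contraction)
  show ?thesis
    by (intro conjI S_maps_X T_maps_X no_contraction T_inj_seq_convergent T_continuous
        halves integral_contraction)
qed

end
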